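(* Let $N\ge1$ be an integer, $d>0$, $T>0$, and $0\le s_1\le\dots\le s_N$. Let $x^*$ be the optimal solution of the (assumed feasible) problem $$\min_{x\in\mathbb{R}^{N+1}}\ \sum_{i=1}^{N+1}x_i^2$$ subject to - $\sum_{i=1}^k x_i\ge s_k+kd$ for $1\le k\le N$, - $x_i\ge 2d$ for $2\le i\le N$, - $x_{N+1}\ge d$, - $\sum_{i=1}^{N+1}x_i=T+Nd$. Then for every $2\le i\le N-1$ we have $x_i^*\ge x_{i+1}^*$. Moreover, for such $i$, $x_i^*>x_{i+1}^*$ only if $\sum_{j=1}^i x_j^*=s_i+id$.
   Context: The problem arises from age-of-information minimization for a single energy harvesting transmitter with energy arrival times $s_k$, fixed service time $d$, and session length $T$. Its objective is strictly convex, so the optimal solution is unique. *)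

theory Defs
  imports Complex_Main
begin

text \<open>Vectors x in R^(N+1) are represented as functions nat => real, using
  the indices 1..N+1 (values outside that range are irrelevant).\<close>

definition aoi_feasible :: "nat \<Rightarrow> real \<Rightarrow> real \<Rightarrow> (nat \<Rightarrow> real) \<Rightarrow> (nat \<Rightarrow> real) \<Rightarrow> bool" where
  "aoi_feasible N d T s x \<longleftrightarrow>
     (\<forall>k\<in>{1..N}. (\<Sum>i=1..k. x i) \<ge> s k + real k * d) \<and>
     (\<forall>i\<in>{2..N}. x i \<ge> 2 * d) \<and>
     x (N + 1) \<ge> d \<and>
     (\<Sum>i=1..N+1. x i) = T + real N * d"

definition aoi_objective :: "nat \<Rightarrow> (nat \<Rightarrow> real) \<Rightarrow> real" where
  "aoi_objective N x = (\<Sum>i=1..N+1. (x i)^2)"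

definition aoi_optimal :: "nat \<Rightarrow> real \<Rightarrow> real \<Rightarrow> (nat \<Rightarrow> real) \<Rightarrow> (nat \<Rightarrow> real) \<Rightarrow> bool" where
  "aoi_optimal N d T s x \<longleftrightarrow> aoi_feasible N d T s x \<and>
     (\<forall>y. aoi_feasible N d T s y \<longrightarrow> aoi_objective N x \<le> aoi_objective N y)"

end

theory Submission
  imports Defs
begin

text \<open>Exchange argument: moving an amount e from coordinate i+1 to coordinate i
  changes only the i-th prefix sum, by e, and changes the objective by
  2 e (x i - x (i+1) + e). If x i < x (i+1), a small positive e keeps all constraints
  and lowers the objective. If x i > x (i+1) and the i-th prefix constraint is slack,
  a small negative e does the same.\<close>

lemma sum_fun_upd:
  fixes f :: "'a \<Rightarrow> 'b::ab_group_add"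
  assumes "finite A"
  shows "sum (f(a := b)) A = sum f A + (if a \<in> A then b - f a else 0)"
proof (cases "a \<in> A")
  case True
  then show ?thesis
    using assms by (simp add: sum.remove[of A a] sum.remove[of A a "f(a := b)"])
next
  case False
  then have "sum (f(a := b)) A = sum f A"
    by (intro sum.cong) auto
  with False show ?thesis by simp
qed

definition transfer :: "(nat \<Rightarrow> real) \<Rightarrow> nat \<Rightarrow> real \<Rightarrow> nat \<Rightarrow> real" where
  "transfer x i e = x(i := x i + e, Suc i := x (Suc i) - e)"

lemma sum_transfer:
  assumes "finite A"
  shows "sum (transfer x i e) A =
    sum x A + (if i \<in> A then e else 0) - (if Suc i \<in> A then e else 0)"
  unfolding transfer_def sum_fun_upd[OF assms] by simp

lemma sum_transfer_prefix:
  assumes "1 \<le> i"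
  shows "(\<Sum>j=1..k. transfer x i e j) = (\<Sum>j=1..k. x j) + (if k = i then e else 0)"
  using assms by (simp add: sum_transfer)

lemma sum_squares_transfer:
  assumes "i \<in> A" "Suc i \<in> A" "finite A"
  shows "(\<Sum>j\<in>A. (transfer x i e j)^2) = (\<Sum>j\<in>A. (x j)^2) + 2 * e * (x i - x (Suc i) + e)"
proof -
  have "(\<lambda>j. (transfer x i e j)^2) =
      (\<lambda>j. (x j)^2)(i := (x i + e)^2, Suc i := (x (Suc i) - e)^2)"
    by (auto simp: transfer_def)
  then have "(\<Sum>j\<in>A. (transfer x i e j)^2) =
      (\<Sum>j\<in>A. (x j)^2) + ((x i + e)^2 - (x i)^2) + ((x (Suc i) - e)^2 - (x (Suc i))^2)"
    using assms by (simp only: sum_fun_upd) simp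
  then show ?thesis
    by (simp add: power2_eq_square algebra_simps)
qed

lemma aoi_feasible_transfer:
  assumes F: "aoi_feasible N d T s x" and i: "2 \<le> i" "Suc i \<le> N"
    and lower_i: "x i + e \<ge> 2 * d" and lower_Suc_i: "x (Suc i) - e \<ge> 2 * d"
    and prefix_i: "(\<Sum>j=1..i. x j) + e \<ge> s i + real i * d"
  shows "aoi_feasible N d T s (transfer x i e)"
proof -
  have "(\<Sum>j=1..k. transfer x i e j) \<ge> s k + real k * d" if k: "k \<in> {1..N}" for k
  proof -
    have "(\<Sum>j=1..k. x j) \<ge> s k + real k * d"
      using F k unfolding aoi_feasible_def by blast
    moreover have "(\<Sum>j=1..k. transfer x i e j) = (\<Sum>j=1..k. x j) + (if k = i then e else 0)"
      using i by (intro sum_transfer_prefix) simp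
    ultimately show ?thesis
      using prefix_i by (cases "k = i") simp_all
  qed
  moreover have "\<forall>j\<in>{2..N}. transfer x i e j \<ge> 2 * d"
    using F lower_i lower_Suc_i unfolding aoi_feasible_def by (auto simp: transfer_def)
  moreover have "transfer x i e (N + 1) \<ge> d"
    using F i unfolding aoi_feasible_def by (auto simp: transfer_def)
  moreover have "(\<Sum>j=1..N+1. transfer x i e j) = T + real N * d"
    using F i sum_transfer_prefix[where k = "N + 1" and i = i and x = x and e = e]
    unfolding aoi_feasible_def by simp
  ultimately show ?thesis
    unfolding aoi_feasible_def by blast
qed

lemma aoi_optimal_transfer_nonneg:
  assumes "aoi_optimal N d T s x" and "1 \<le> i" "Suc i \<le> N + 1"
    and "aoi_feasible N d T s (transfer x i e)"
  shows "0 \<le> e * (x i - x (Suc i) + e)"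
proof -
  have "aoi_objective N x \<le> aoi_objective N (transfer x i e)"
    using assms(1,4) unfolding aoi_optimal_def by blast
  also have "\<dots> = aoi_objective N x + 2 * e * (x i - x (Suc i) + e)"
    unfolding aoi_objective_def using assms(2,3) by (intro sum_squares_transfer) auto
  finally show ?thesis by simp
qed

lemma aoi_optimal_nonincreasing:
  assumes opt: "aoi_optimal N d T s x" and i: "2 \<le> i" "Suc i \<le> N"
  shows "x (Suc i) \<le> x i"
proof (rule ccontr)
  define gap where "gap = x (Suc i) - x i"
  assume "\<not> x (Suc i) \<le> x i"
  then have "gap > 0"
    by (simp add: gap_def)
  have F: "aoi_feasible N d T s x"
    using opt unfolding aoi_optimal_def by blast
  then have "x i \<ge> 2 * d" "(\<Sum>j=1..i. x j) \<ge> s i + real i * d"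
    using i unfolding aoi_feasible_def by auto
  with \<open>gap > 0\<close> gap_def have "aoi_feasible N d T s (transfer x i (gap / 2))"
    by (intro aoi_feasible_transfer[OF F i]) linarith+
  with opt i have "0 \<le> gap / 2 * (x i - x (Suc i) + gap / 2)"
    by (intro aoi_optimal_transfer_nonneg) auto
  also have "\<dots> = - (gap^2 / 4)"
    by (simp add: gap_def power2_eq_square field_simps)
  finally show False
    using \<open>gap > 0\<close> by simp
qed

lemma aoi_optimal_decrease_imp_tight:
  assumes opt: "aoi_optimal N d T s x" and i: "2 \<le> i" "Suc i \<le> N"
    and decrease: "x (Suc i) < x i"
  shows "(\<Sum>j=1..i. x j) = s i + real i * d"
proof (rule ccontr)
  define gap where "gap = x i - x (Suc i)"
  define slack where "slack = (\<Sum>j=1..i. x j) - (s i + real i * d)"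
  define e where "e = min (gap / 2) slack"
  have F: "aoi_feasible N d T s x"
    using opt unfolding aoi_optimal_def by blast
  then have "x (Suc i) \<ge> 2 * d" "slack \<ge> 0"
    using i unfolding aoi_feasible_def slack_def by auto
  moreover assume "(\<Sum>j=1..i. x j) \<noteq> s i + real i * d"
  ultimately have "slack > 0"
    by (simp add: slack_def)
  moreover have "gap > 0"
    using decrease by (simp add: gap_def)
  ultimately have "e > 0"
    by (simp add: e_def)
  have "e \<le> gap / 2" "e \<le> slack"
    by (simp_all add: e_def)
  with \<open>e > 0\<close> \<open>x (Suc i) \<ge> 2 * d\<close> gap_def slack_def
  have "aoi_feasible N d T s (transfer x i (- e))"
    by (intro aoi_feasible_transfer[OF F i]) linarith+
  with opt i have "0 \<le> - e * (x i - x (Suc i) + - e)"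
    by (intro aoi_optimal_transfer_nonneg) auto
  then have "0 \<le> - e * (gap - e)"
    by (simp add: gap_def)
  moreover have "0 < e * (gap - e)"
    using \<open>e > 0\<close> \<open>e \<le> gap / 2\<close> by (intro mult_pos_pos) auto
  ultimately show False by linarith
qed

theorem lemma1:
  fixes N :: nat and d T :: real and s x :: "nat \<Rightarrow> real"
  assumes "N \<ge> 1" and "d > 0" and "T > 0"
    and "0 \<le> s 1" and "\<And>k. 1 \<le> k \<Longrightarrow> k < N \<Longrightarrow> s k \<le> s (k + 1)"
    and "aoi_optimal N d T s x"
  shows "\<forall>i\<in>{2..N-1}. x i \<ge> x (i + 1) \<and>
           (x i > x (i + 1) \<longrightarrow> (\<Sum>j=1..i. x j) = s i + real i * d)"
proof
  fix i assume "i \<in> {2..N-1}"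
  then have i: "2 \<le> i" "Suc i \<le> N" by auto
  show "x i \<ge> x (i + 1) \<and> (x i > x (i + 1) \<longrightarrow> (\<Sum>j=1..i. x j) = s i + real i * d)"
    using aoi_optimal_nonincreasing[OF assms(6) i] aoi_optimal_decrease_imp_tight[OF assms(6) i]
    by simp
qed

end
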